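(* Let $k$ be a field of characteristic $\neq 2$, let $\mathcal O$ be the Lie algebra described in the context, and let $\mathcal I$ be an ideal of $\mathcal O$. Let $J_{\mathcal I}=\{p(t)\in k[t]: v_0p(t)+v_1p_1(t)+v_2p_2(t)\in\mathcal I\text{ for some }p_1(t),p_2(t)\in k[t]\}$. Then: (i) $J_{\mathcal I}$ is an ideal of $k[t]$; (ii) $\mathcal O J_{\mathcal I}t(t-1)\subseteq\mathcal I\subseteq\mathcal O J_{\mathcal I}$.
   Context: $\mathcal O$ is the Lie algebra over $k$ which is a free $k[t]$-module with basis $v_0,v_1,v_2$, with $k[t]$-bilinear bracket determined by $[v_0,v_1]=-v_2(t-1)$, $[v_1,v_2]=-v_0$, $[v_2,v_0]=v_1t$ (it is isomorphic to the Onsager algebra). For a subset $J\subseteq k[t]$, $\mathcal O J$ denotes $v_0J\oplus v_1J\oplus v_2J$ when $J$ is an ideal; $\mathcal O Jt(t-1)=\mathcal O\,(Jt(t-1))$. *)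

theory Defs
  imports "HOL-Computational_Algebra.Polynomial"
begin

text \<open>The Onsager-type Lie algebra O: free k[t]-module with basis v0,v1,v2.
  An element v0 p0 + v1 p1 + v2 p2 is represented by the triple (p0, p1, p2).\<close>

type_synonym 'a ons = "'a poly \<times> 'a poly \<times> 'a poly"

text \<open>k[t]-bilinear bracket determined by
  [v0,v1] = -v2 (t-1), [v1,v2] = -v0, [v2,v0] = v1 t (and antisymmetry, [vi,vi]=0).\<close>

definition ons_bracket :: "'a::field ons \<Rightarrow> 'a ons \<Rightarrow> 'a ons" where
  "ons_bracket x y = (case x of (a0, a1, a2) \<Rightarrow> case y of (b0, b1, b2) \<Rightarrow>
     ( - (a1 * b2 - a2 * b1),
       [:0, 1:] * (a2 * b0 - a0 * b2),
       - ([:-1, 1:] * (a0 * b1 - a1 * b0))))"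

definition ons_add :: "'a::field ons \<Rightarrow> 'a ons \<Rightarrow> 'a ons" where
  "ons_add x y = (case x of (a0, a1, a2) \<Rightarrow> case y of (b0, b1, b2) \<Rightarrow> (a0 + b0, a1 + b1, a2 + b2))"

definition ons_scale :: "'a::field \<Rightarrow> 'a ons \<Rightarrow> 'a ons" where
  "ons_scale c x = (case x of (a0, a1, a2) \<Rightarrow> (smult c a0, smult c a1, smult c a2))"

definition ons_lie_ideal :: "'a::field ons set \<Rightarrow> bool" where
  "ons_lie_ideal I \<longleftrightarrow>
     (0, 0, 0) \<in> I \<and>
     (\<forall>x\<in>I. \<forall>y\<in>I. ons_add x y \<in> I) \<and>
     (\<forall>c. \<forall>x\<in>I. ons_scale c x \<in> I) \<and>
     (\<forall>x\<in>I. \<forall>y. ons_bracket y x \<in> I)"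

definition poly_ideal :: "'a::field poly set \<Rightarrow> bool" where
  "poly_ideal J \<longleftrightarrow>
     0 \<in> J \<and> (\<forall>p\<in>J. \<forall>q\<in>J. p + q \<in> J) \<and> (\<forall>p\<in>J. \<forall>q. q * p \<in> J)"

definition J_of :: "'a::field ons set \<Rightarrow> 'a poly set" where
  "J_of I = {p. \<exists>p1 p2. (p, p1, p2) \<in> I}"

definition ons_of :: "'a::field poly set \<Rightarrow> 'a ons set" where
  "ons_of J = {(p0, p1, p2). p0 \<in> J \<and> p1 \<in> J \<and> p2 \<in> J}"

definition times_t_tm1 :: "'a::field poly set \<Rightarrow> 'a poly set" where
  "times_t_tm1 J = {p * [:0, 1:] * [:-1, 1:] | p. p \<in> J}"

end

theory Submission
  imports Defs
begin

text \<open>Bracketing twice with the basis vector \<open>v\<^sub>2\<close> multiplies the \<open>v\<^sub>0\<close>-coefficient by \<open>t\<close>,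
  so \<open>J\<^sub>I\<close> is closed under multiplication by \<open>t\<close> and hence is an ideal. One bracket with
  \<open>v\<^sub>2\<close> resp. \<open>v\<^sub>1\<close> moves the \<open>v\<^sub>1\<close>- resp. \<open>v\<^sub>2\<close>-coefficient of an element of \<open>I\<close> to the
  \<open>v\<^sub>0\<close>-slot, which gives \<open>I \<subseteq> O J\<^sub>I\<close>. Conversely, the double brackets \<open>[v\<^sub>0,[v\<^sub>1,x]]\<close>
  and \<open>[v\<^sub>0,[v\<^sub>2,x]]\<close> of \<open>x = v\<^sub>0 p + \<dots>\<close> are \<open>v\<^sub>1 p t(t-1)\<close> and \<open>v\<^sub>2 p t(t-1)\<close> up to sign, and
  one more bracket with \<open>v\<^sub>2\<close> turns the former into \<open>v\<^sub>0 p t(t-1)\<close>.\<close>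

lemma ons_bracket_simp [simp]:
  "ons_bracket (a0, a1, a2) (b0, b1, b2) =
     (- (a1 * b2 - a2 * b1), [:0, 1:] * (a2 * b0 - a0 * b2), - ([:-1, 1:] * (a0 * b1 - a1 * b0)))"
  by (simp add: ons_bracket_def)

lemma ons_add_simp [simp]: "ons_add (a0, a1, a2) (b0, b1, b2) = (a0 + b0, a1 + b1, a2 + b2)"
  by (simp add: ons_add_def)

lemma ons_scale_simp [simp]: "ons_scale c (a0, a1, a2) = (smult c a0, smult c a1, smult c a2)"
  by (simp add: ons_scale_def)

lemma ons_lie_idealD:
  assumes "ons_lie_ideal I"
  shows ons_lie_ideal_zero: "(0, 0, 0) \<in> I"
    and ons_lie_ideal_add: "x \<in> I \<Longrightarrow> y \<in> I \<Longrightarrow> ons_add x y \<in> I"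
    and ons_lie_ideal_scale: "x \<in> I \<Longrightarrow> ons_scale c x \<in> I"
    and ons_lie_ideal_bracket: "x \<in> I \<Longrightarrow> ons_bracket y x \<in> I"
  using assms unfolding ons_lie_ideal_def by blast+

lemma J_ofI: "(p, p1, p2) \<in> I \<Longrightarrow> p \<in> J_of I"
  unfolding J_of_def by blast

lemma J_ofE:
  assumes "p \<in> J_of I"
  obtains p1 p2 where "(p, p1, p2) \<in> I"
  using assms unfolding J_of_def by blast

lemma poly_idealI_mult_X_closed:
  fixes J :: "'a::field poly set"
  assumes zero: "0 \<in> J"
    and add: "\<And>p q. p \<in> J \<Longrightarrow> q \<in> J \<Longrightarrow> p + q \<in> J"
    and smult: "\<And>c p. p \<in> J \<Longrightarrow> smult c p \<in> J"
    and mult_X: "\<And>p. p \<in> J \<Longrightarrow> [:0, 1:] * p \<in> J"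
  shows "poly_ideal J"
proof -
  have "q * p \<in> J" if "p \<in> J" for p q
  proof (induction q)
    case 0
    show ?case using zero by simp
  next
    case (pCons a q)
    have "pCons a q * p = smult a p + [:0, 1:] * (q * p)"
      by (simp add: algebra_simps)
    then show ?case using add smult mult_X pCons.IH \<open>p \<in> J\<close> by metis
  qed
  then show ?thesis unfolding poly_ideal_def using zero add by blast
qed

lemma poly_ideal_J_of:
  assumes I: "ons_lie_ideal I"
  shows "poly_ideal (J_of I)"
proof (rule poly_idealI_mult_X_closed)
  show "0 \<in> J_of I" using ons_lie_ideal_zero[OF I] by (rule J_ofI)
next
  fix p q assume "p \<in> J_of I" "q \<in> J_of I"
  then obtain p1 p2 q1 q2 where "(p, p1, p2) \<in> I" "(q, q1, q2) \<in> I" by (meson J_ofE)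
  then have "ons_add (p, p1, p2) (q, q1, q2) \<in> I" by (rule ons_lie_ideal_add[OF I])
  then show "p + q \<in> J_of I" by (simp add: J_ofI)
next
  fix c p assume "p \<in> J_of I"
  then obtain p1 p2 where "(p, p1, p2) \<in> I" by (rule J_ofE)
  then have "ons_scale c (p, p1, p2) \<in> I" by (rule ons_lie_ideal_scale[OF I])
  then show "smult c p \<in> J_of I" by (simp add: J_ofI)
next
  fix p assume "p \<in> J_of I"
  then obtain p1 p2 where "(p, p1, p2) \<in> I" by (rule J_ofE)
  then have "ons_bracket (0, 0, 1) (ons_bracket (0, 0, 1) (p, p1, p2)) \<in> I"
    using ons_lie_ideal_bracket[OF I] by blast
  then show "[:0, 1:] * p \<in> J_of I" by (simp add: J_ofI)
qed

lemma ons_lie_ideal_subset_ons_of_J_of: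
  assumes I: "ons_lie_ideal I"
  shows "I \<subseteq> ons_of (J_of I)"
proof
  fix x assume "x \<in> I"
  obtain a0 a1 a2 where x: "x = (a0, a1, a2)" by (cases x) auto
  have "ons_bracket (0, 0, 1) x \<in> I" "ons_bracket (0, -1, 0) x \<in> I"
    using \<open>x \<in> I\<close> ons_lie_ideal_bracket[OF I] by blast+
  then have "a1 \<in> J_of I" "a2 \<in> J_of I" by (simp_all add: x J_ofI)
  moreover have "a0 \<in> J_of I" using \<open>x \<in> I\<close> x by (simp add: J_ofI)
  ultimately show "x \<in> ons_of (J_of I)" by (simp add: x ons_of_def)
qed

lemma ons_lie_ideal_contains_t_tm1_multiples:
  assumes I: "ons_lie_ideal I" and "p \<in> J_of I"
  defines "q \<equiv> p * [:0, 1:] * [:-1, 1:]"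
  shows "(q, 0, 0) \<in> I" and "(0, q, 0) \<in> I" and "(0, 0, q) \<in> I"
proof -
  obtain p1 p2 where x: "(p, p1, p2) \<in> I" using \<open>p \<in> J_of I\<close> by (rule J_ofE)
  have "ons_bracket (-1, 0, 0) (ons_bracket (0, 1, 0) (p, p1, p2)) \<in> I"
    using x ons_lie_ideal_bracket[OF I] by blast
  then show v1: "(0, q, 0) \<in> I" by (simp add: q_def algebra_simps)
  have "ons_bracket (-1, 0, 0) (ons_bracket (0, 0, 1) (p, p1, p2)) \<in> I"
    using x ons_lie_ideal_bracket[OF I] by blast
  then show "(0, 0, q) \<in> I" by (simp add: q_def algebra_simps)
  have "ons_bracket (0, 0, 1) (0, q, 0) \<in> I"
    using v1 ons_lie_ideal_bracket[OF I] by blast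
  then show "(q, 0, 0) \<in> I" by simp
qed

lemma ons_of_times_t_tm1_J_of_subset:
  assumes I: "ons_lie_ideal I"
  shows "ons_of (times_t_tm1 (J_of I)) \<subseteq> I"
proof
  fix x assume "x \<in> ons_of (times_t_tm1 (J_of I))"
  then obtain a b c
    where x: "x = (a * [:0, 1:] * [:-1, 1:], b * [:0, 1:] * [:-1, 1:], c * [:0, 1:] * [:-1, 1:])"
    and a: "a \<in> J_of I" and b: "b \<in> J_of I" and c: "c \<in> J_of I"
    unfolding ons_of_def times_t_tm1_def by blast
  have "ons_add (a * [:0, 1:] * [:-1, 1:], 0, 0)
      (ons_add (0, b * [:0, 1:] * [:-1, 1:], 0) (0, 0, c * [:0, 1:] * [:-1, 1:])) \<in> I"
    using ons_lie_ideal_contains_t_tm1_multiples[OF I a]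
      ons_lie_ideal_contains_t_tm1_multiples[OF I b]
      ons_lie_ideal_contains_t_tm1_multiples[OF I c]
    by (intro ons_lie_ideal_add[OF I])
  then show "x \<in> I" by (simp add: x)
qed

theorem proposition4p6:
  fixes I :: "'a::field ons set"
  assumes char: "(2::'a) \<noteq> 0"
    and ideal: "ons_lie_ideal I"
  shows "poly_ideal (J_of I) \<and>
         ons_of (times_t_tm1 (J_of I)) \<subseteq> I \<and> I \<subseteq> ons_of (J_of I)"
  using poly_ideal_J_of ons_of_times_t_tm1_J_of_subset ons_lie_ideal_subset_ons_of_J_of ideal
  by blast

end
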